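(* Let $\mathcal{T}=[0,T_{max}]$, let $\mathcal{T}_d\subseteq\mathcal{T}$ be compact, let $\mathcal{X}=[X_{min},X_{max}]$ with $0\le X_{min}<X_{max}$, let $m$ be a probability measure on $\mathcal{X}\times\mathcal{T}_a$ (with $\mathcal{T}_a\subseteq\mathcal{T}$ compact), and let $G>0$. Let $V:\mathbb{R}^+\to\mathbb{R}^+$ be a strictly decreasing, Lipschitz continuous speed function. Then for every $F\in\mathcal{P}_{m,G}$ there exists a unique $z_F\in\mathcal{C}(\mathcal{T})$ such that $$z_F(t)=\int_0^t V\big(F(S_s(z_F))\big)\,ds\qquad\text{for all } t\in\mathcal{T}.$$
   Context: $\mathcal{C}(\mathcal{T})$ denotes the space of real-valued continuous functions on $\mathcal{T}$ with the uniform norm. $\lambda_2$ denotes Lebesgue measure on $\mathbb{R}^2$. $\mathcal{P}_{m,G}$ is the set of all Borel probability measures $F$ on $\mathcal{T}_d\times\mathcal{X}$ such that (i) $F(B)\le G\,\lambda_2(B)$ for every Borel set $B\subseteq\mathcal{T}_d\times\mathcal{X}$, and (ii) $F(\mathcal{T}_d\times B)=m(B\times\mathcal{T}_a)$ for every Borel set $B\subseteq\mathcal{X}$. For $z\in\mathcal{C}(\mathcal{T})$ and $t\in\mathcal{T}$, $S_t(z):=\{(\tau,\xi)\,:\,\tau\in[0,t]\cap\mathcal{T}_d,\ \xi\in(z(t)-z(\tau),\infty)\cap\mathcal{X}\}$ (the set of (departure time, trip length) pairs of trips still travelling at time $t$). *)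

theory Defs
  imports "HOL-Probability.Probability"
begin

text \<open>S_t(z): (departure time, trip length) pairs of trips still travelling at time t.\<close>
definition still_travelling ::
  "real set \<Rightarrow> real set \<Rightarrow> (real \<Rightarrow> real) \<Rightarrow> real \<Rightarrow> (real \<times> real) set" where
  "still_travelling Td X z t =
     {(\<tau>, \<xi>). \<tau> \<in> {0..t} \<inter> Td \<and> \<xi> \<in> {z t - z \<tau> <..} \<inter> X}"

text \<open>P_{m,G}: Borel probability measures F on Td x X (as measures on the Borel sets of
  R^2 concentrated on Td x X), with density bounded by G w.r.t. Lebesgue measure
  and with X-marginal equal to the X-marginal of m.\<close>
definition P_mG ::
  "real set \<Rightarrow> real set \<Rightarrow> real set \<Rightarrow> (real \<times> real) measure \<Rightarrow> real \<Rightarrow> (real \<times> real) measure set" where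
  "P_mG Td Ta X m G =
     {F. sets F = sets borel \<and> prob_space F \<and> emeasure F (Td \<times> X) = 1 \<and>
         (\<forall>B \<in> sets borel. B \<subseteq> Td \<times> X \<longrightarrow> emeasure F B \<le> ennreal G * emeasure lborel B) \<and>
         (\<forall>B \<in> sets borel. B \<subseteq> X \<longrightarrow> emeasure F (Td \<times> B) = emeasure m (B \<times> Ta))}"

end

theory Submission
  imports Defs
begin

(* If |z - w| <= D on [0, s], the thresholds z s - z tau and w s - w tau of the sets S_s(z) and
   S_s(w) differ by at most 2 D, so the two sets differ by a subset of a strip of height 2 D over
   [0, s]; by the density bound its F-measure is at most 2 G s D.  Hence s |-> V (F (S_s(z))) is a
   causal Lipschitz functional of z, and the same density bound makes it continuous in s.  The
   equation z t = integral over [0, t] of V (F (S_s(z))) is thus a Volterra integral equation with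
   Lipschitz kernel, which has a unique continuous solution by Banach's fixed point theorem for
   Bielecki's weighted norm sup_t exp (- k t) |z t| with k larger than the Lipschitz constant. *)

lemma has_integral_exp_mult:
  fixes k c :: real
  assumes "k \<noteq> 0" "0 \<le> c"
  shows "((\<lambda>s. exp (k * s)) has_integral (exp (k * c) - 1) / k) {0..c}"
proof -
  have "((\<lambda>s. exp (k * s)) has_integral exp (k * c) / k - exp (k * 0) / k) {0..c}"
  proof (rule fundamental_theorem_of_calculus)
    show "((\<lambda>s. exp (k * s) / k) has_vector_derivative exp (k * x)) (at x within {0..c})" for x
      using assms(1)
      by (auto intro!: derivative_eq_intros simp flip: has_real_derivative_iff_has_vector_derivative)
  qed (use assms(2) in auto)
  then show ?thesis
    by (simp add: diff_divide_distrib)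
qed

lemma abs_integral_le_exp_bound:
  fixes f :: "real \<Rightarrow> real"
  assumes "f integrable_on {0..c}" "\<And>s. s \<in> {0..c} \<Longrightarrow> \<bar>f s\<bar> \<le> M * exp (k * s)"
    and "0 < k" "0 \<le> c"
  shows "\<bar>integral {0..c} f\<bar> \<le> M * ((exp (k * c) - 1) / k)"
proof -
  have bound: "((\<lambda>s. M * exp (k * s)) has_integral M * ((exp (k * c) - 1) / k)) {0..c}"
    using assms(3,4) by (intro has_integral_mult_right has_integral_exp_mult) auto
  have "\<bar>integral {0..c} f\<bar> \<le> integral {0..c} (\<lambda>s. M * exp (k * s))"
    using integral_norm_bound_integral[OF assms(1), of "\<lambda>s. M * exp (k * s)"] bound assms(2)
    by (auto simp: integrable_on_def)
  also have "\<dots> = M * ((exp (k * c) - 1) / k)"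
    using bound by (rule integral_unique)
  finally show ?thesis .
qed

locale volterra_operator =
  fixes T L :: real and H :: "(real \<Rightarrow> real) \<Rightarrow> real \<Rightarrow> real"
  assumes T_nonneg: "0 \<le> T"
    and continuous_on_H: "\<And>z. continuous_on {0..T} z \<Longrightarrow> continuous_on {0..T} (H z)"
    and H_lipschitz: "\<And>z w s D. continuous_on {0..T} z \<Longrightarrow> continuous_on {0..T} w \<Longrightarrow>
      s \<in> {0..T} \<Longrightarrow> (\<And>\<tau>. \<tau> \<in> {0..s} \<Longrightarrow> \<bar>z \<tau> - w \<tau>\<bar> \<le> D) \<Longrightarrow>
      \<bar>H z s - H w s\<bar> \<le> L * D"
begin

lemma L_nonneg: "0 \<le> L"
  using H_lipschitz[of "\<lambda>_. 0" "\<lambda>_. 0" 0 1] T_nonneg by auto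

lemma H_cong:
  assumes "continuous_on {0..T} z" "continuous_on {0..T} w" "s \<in> {0..T}"
    and "\<And>\<tau>. \<tau> \<in> {0..s} \<Longrightarrow> z \<tau> = w \<tau>"
  shows "H z s = H w s"
  using H_lipschitz[OF assms(1-3), of 0] assms(4) by auto

lemma integrable_H:
  assumes "continuous_on {0..T} z" "t \<le> T"
  shows "H z integrable_on {0..t}"
  using continuous_on_H[OF assms(1)] assms(2)
  by (intro integrable_continuous_real) (auto elim: continuous_on_subset)

lemma continuous_on_integral_H:
  assumes "continuous_on {0..T} z"
  shows "continuous_on {0..T} (\<lambda>t. integral {0..t} (H z))"
  using integrable_H[OF assms order_refl] by (rule indefinite_integral_continuous_1)

text \<open>Bielecki's change of unknown y t = exp (- k t) z t, with y extended constantly outside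
  [0, T] so that it lives in the Banach space of bounded continuous functions on the real line.\<close>

definition weighted :: "real \<Rightarrow> (real \<Rightarrow> real) \<Rightarrow> real \<Rightarrow>\<^sub>C real" where
  "weighted k z = Bcontfun (ext_cont (\<lambda>t. exp (- k * t) * z t) 0 T)"

definition unweighted :: "real \<Rightarrow> (real \<Rightarrow>\<^sub>C real) \<Rightarrow> real \<Rightarrow> real" where
  "unweighted k y t = exp (k * t) * y t"

definition picard :: "real \<Rightarrow> (real \<Rightarrow>\<^sub>C real) \<Rightarrow> real \<Rightarrow>\<^sub>C real" where
  "picard k y = weighted k (\<lambda>t. integral {0..t} (H (unweighted k y)))"

lemma clamp_in_domain: "clamp 0 T t \<in> {0..T}"
  using T_nonneg clamp_in_interval[of 0 T t] by simp

lemma apply_weighted: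
  assumes "continuous_on {0..T} z"
  shows "weighted k z t = exp (- k * clamp 0 T t) * z (clamp 0 T t)"
proof -
  have "continuous_on {0..T} (\<lambda>t. exp (- k * t) * z t)"
    by (intro continuous_intros assms)
  then have "continuous_on (cbox 0 T) (\<lambda>t. exp (- k * t) * z t)"
    by simp
  then obtain g :: "real \<Rightarrow>\<^sub>C real" where g: "\<And>t. g t = exp (- k * clamp 0 T t) * z (clamp 0 T t)"
    using continuous_on_cbox_bcontfunE by blast
  then have "ext_cont (\<lambda>t. exp (- k * t) * z t) 0 T = apply_bcontfun g"
    by (auto simp: ext_cont_def)
  then have "weighted k z = g"
    by (simp add: weighted_def apply_bcontfun_inverse)
  then show ?thesis
    using g by simp
qed

lemma weighted_cong:
  assumes "\<And>t. t \<in> {0..T} \<Longrightarrow> z t = w t"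
  shows "weighted k z = weighted k w"
  using assms clamp_in_domain by (simp add: weighted_def ext_cont_def)

lemma continuous_on_unweighted: "continuous_on S (unweighted k y)"
  unfolding unweighted_def by (intro continuous_intros continuous_on_apply_bcontfun)

lemma unweighted_weighted:
  assumes "continuous_on {0..T} z" "t \<in> {0..T}"
  shows "unweighted k (weighted k z) t = z t"
  using assms by (simp add: unweighted_def apply_weighted exp_minus field_simps)

lemma abs_unweighted_diff_le:
  assumes "0 \<le> k" "\<tau> \<le> s"
  shows "\<bar>unweighted k y1 \<tau> - unweighted k y2 \<tau>\<bar> \<le> exp (k * s) * dist y1 y2"
proof -
  have "\<bar>unweighted k y1 \<tau> - unweighted k y2 \<tau>\<bar> = exp (k * \<tau>) * dist (y1 \<tau>) (y2 \<tau>)"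
    by (simp add: unweighted_def dist_real_def abs_mult flip: right_diff_distrib)
  also have "\<dots> \<le> exp (k * s) * dist y1 y2"
    using assms by (intro mult_mono dist_bounded) (auto intro: mult_left_mono)
  finally show ?thesis .
qed

lemma abs_H_unweighted_diff_le:
  assumes "0 \<le> k" "s \<in> {0..T}"
  shows "\<bar>H (unweighted k y1) s - H (unweighted k y2) s\<bar> \<le> L * dist y1 y2 * exp (k * s)"
proof -
  have "\<bar>H (unweighted k y1) s - H (unweighted k y2) s\<bar> \<le> L * (exp (k * s) * dist y1 y2)"
    using assms abs_unweighted_diff_le[OF assms(1)]
    by (intro H_lipschitz continuous_on_unweighted) auto
  then show ?thesis
    by (simp add: ac_simps)
qed

lemma dist_picard_le:
  assumes "0 < k"
  shows "dist (picard k y1) (picard k y2) \<le> L / k * dist y1 y2"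
proof (rule dist_bound)
  fix t
  define c where "c = clamp 0 T t"
  define d where "d = dist y1 y2"
  let ?h = "\<lambda>y. H (unweighted k y)"
  have c: "c \<in> {0..T}"
    using clamp_in_domain by (simp add: c_def)
  have "integral {0..c} (\<lambda>s. ?h y1 s - ?h y2 s) = integral {0..c} (?h y1) - integral {0..c} (?h y2)"
    using c by (intro integral_diff integrable_H continuous_on_unweighted) auto
  moreover have "\<bar>integral {0..c} (\<lambda>s. ?h y1 s - ?h y2 s)\<bar> \<le> L * d * ((exp (k * c) - 1) / k)"
    using abs_H_unweighted_diff_le c assms unfolding d_def
    by (intro abs_integral_le_exp_bound integrable_diff integrable_H continuous_on_unweighted) auto
  ultimately have integral_bound:
    "\<bar>integral {0..c} (?h y1) - integral {0..c} (?h y2)\<bar> \<le> L * d * ((exp (k * c) - 1) / k)"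
    by simp
  have "dist (picard k y1 t) (picard k y2 t)
      = exp (- k * c) * \<bar>integral {0..c} (?h y1) - integral {0..c} (?h y2)\<bar>"
    by (simp add: picard_def apply_weighted continuous_on_integral_H continuous_on_unweighted
        dist_real_def abs_mult c_def flip: right_diff_distrib)
  also have "\<dots> \<le> exp (- k * c) * (L * d * ((exp (k * c) - 1) / k))"
    using integral_bound by (rule mult_left_mono) simp
  also have "\<dots> = L * d / k * (1 - exp (- k * c))"
    using assms by (simp add: exp_minus field_simps)
  also have "\<dots> \<le> L * d / k"
  proof (rule mult_left_le)
    show "0 \<le> L * d / k"
      using L_nonneg assms by (simp add: d_def)
  qed simp
  finally show "dist (picard k y1 t) (picard k y2 t) \<le> L / k * dist y1 y2"
    by (simp add: d_def)
qed

lemma fixed_point_solves: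
  assumes "picard k y = y" "t \<in> {0..T}"
  shows "integral {0..t} (H (unweighted k y)) = unweighted k y t"
proof -
  have "unweighted k y t = unweighted k (picard k y) t"
    using assms(1) by simp
  also have "\<dots> = integral {0..t} (H (unweighted k y))"
    unfolding picard_def using assms(2)
    by (intro unweighted_weighted continuous_on_integral_H continuous_on_unweighted)
  finally show ?thesis ..
qed

lemma solution_is_fixed_point:
  assumes "continuous_on {0..T} w" "\<And>t. t \<in> {0..T} \<Longrightarrow> integral {0..t} (H w) = w t"
  shows "picard k (weighted k w) = weighted k w"
  unfolding picard_def
proof (rule weighted_cong)
  fix t assume t: "t \<in> {0..T}"
  have "integral {0..t} (H (unweighted k (weighted k w))) = integral {0..t} (H w)"
  proof (rule integral_cong)
    fix s assume "s \<in> {0..t}"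
    then show "H (unweighted k (weighted k w)) s = H w s"
      using t assms(1) by (intro H_cong continuous_on_unweighted unweighted_weighted) auto
  qed
  then show "integral {0..t} (H (unweighted k (weighted k w))) = w t"
    using assms(2)[OF t] by simp
qed

theorem integral_equation_unique_solution:
  "\<exists>z. continuous_on {0..T} z \<and> (\<forall>t \<in> {0..T}. (H z has_integral z t) {0..t}) \<and>
     (\<forall>w. continuous_on {0..T} w \<and> (\<forall>t \<in> {0..T}. (H w has_integral w t) {0..t})
        \<longrightarrow> (\<forall>t \<in> {0..T}. w t = z t))"
proof -
  define k where "k = 2 * L + 1"
  have k: "0 < k" "L / k < 1"
    using L_nonneg by (auto simp: k_def)
  have "\<exists>!y. picard k y = y"
    using k L_nonneg dist_picard_le[OF k(1)] by (intro banach_fix_type[of "L / k"]) auto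
  then obtain y where y: "picard k y = y" and y_unique: "\<And>y'. picard k y' = y' \<Longrightarrow> y' = y"
    by metis
  show ?thesis
  proof (intro exI[of _ "unweighted k y"] conjI ballI allI impI)
    show "continuous_on {0..T} (unweighted k y)"
      by (rule continuous_on_unweighted)
    show "(H (unweighted k y) has_integral unweighted k y t) {0..t}" if "t \<in> {0..T}" for t
    proof -
      have "H (unweighted k y) integrable_on {0..t}"
        using that by (intro integrable_H continuous_on_unweighted) auto
      from integrable_integral[OF this] show ?thesis
        unfolding fixed_point_solves[OF y that] .
    qed
  next
    fix w t
    assume w: "continuous_on {0..T} w \<and> (\<forall>t\<in>{0..T}. (H w has_integral w t) {0..t})"
      and t: "t \<in> {0..T}"
    then have "picard k (weighted k w) = weighted k w"
      by (intro solution_is_fixed_point) (auto intro: integral_unique)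
    then have "weighted k w = y"
      by (rule y_unique)
    then show "w t = unweighted k y t"
      using w t unweighted_weighted[of w t k] by simp
  qed
qed

end

definition above_graph ::
  "real set \<Rightarrow> real set \<Rightarrow> real \<Rightarrow> (real \<Rightarrow> real) \<Rightarrow> (real \<times> real) set" where
  "above_graph Td X s f = {(\<tau>, \<xi>). \<tau> \<in> {0..s} \<inter> Td \<and> \<xi> \<in> {f \<tau><..} \<inter> X}"

lemma still_travelling_eq_above_graph:
  "still_travelling Td X z s = above_graph Td X s (\<lambda>\<tau>. z s - z \<tau>)"
  by (simp add: still_travelling_def above_graph_def)

lemma above_graph_borel:
  assumes "closed Td" "closed X" "continuous_on {0..s} f"
  shows "above_graph Td X s f \<in> sets borel"
proof -
  have "above_graph Td X s f = (({0..s} \<inter> Td) \<times> X) \<inter> {p. ext_cont f 0 s (fst p) < snd p}"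
    by (auto simp: above_graph_def)
  moreover have "continuous_on UNIV (ext_cont f 0 s)"
    using assms(3) by (intro continuous_on_ext_cont) simp
  then have "open {p :: real \<times> real. ext_cont f 0 s (fst p) < snd p}"
    by (intro open_Collect_less continuous_on_snd continuous_on_compose2[OF _ continuous_on_fst]) auto
  moreover have "closed (({0..s} \<inter> Td) \<times> X)"
    using assms(1,2) by (intro closed_Times closed_Int) auto
  ultimately show ?thesis
    by (metis borel_closed borel_open sets.Int)
qed

definition graph_strip :: "(real \<Rightarrow> real) \<Rightarrow> real set \<Rightarrow> real \<Rightarrow> (real \<times> real) set" where
  "graph_strip g A \<delta> = {(x, y). x \<in> A \<and> g x - \<delta> < y \<and> y \<le> g x}"

lemma graph_strip_borel:
  assumes [measurable]: "g \<in> borel_measurable borel" "A \<in> sets borel"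
  shows "graph_strip g A \<delta> \<in> sets borel"
proof -
  have "graph_strip g A \<delta> =
      {p \<in> space (borel \<Otimes>\<^sub>M borel). fst p \<in> A \<and> g (fst p) - \<delta> < snd p \<and> snd p \<le> g (fst p)}"
    by (auto simp: graph_strip_def space_pair_measure)
  also have "\<dots> \<in> sets (borel \<Otimes>\<^sub>M borel)"
    by measurable
  finally show ?thesis
    unfolding borel_prod .
qed

lemma emeasure_lborel_graph_strip:
  assumes "g \<in> borel_measurable borel" "A \<in> sets borel" "0 \<le> \<delta>"
  shows "emeasure lborel (graph_strip g A \<delta>) = emeasure lborel A * ennreal \<delta>"
proof -
  have "emeasure lborel (graph_strip g A \<delta>) = emeasure (lborel \<Otimes>\<^sub>M lborel) (graph_strip g A \<delta>)"
    by (simp add: lborel_prod)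
  also have "\<dots> = (\<integral>\<^sup>+x. emeasure lborel (Pair x -` graph_strip g A \<delta>) \<partial>lborel)"
    using graph_strip_borel[OF assms(1,2)]
    by (intro lborel.emeasure_pair_measure_alt) (simp only: lborel_prod sets_lborel)
  also have "\<dots> = (\<integral>\<^sup>+x. ennreal \<delta> * indicator A x \<partial>lborel)"
  proof (rule nn_integral_cong)
    fix x :: real
    have "Pair x -` graph_strip g A \<delta> = (if x \<in> A then {g x - \<delta> <.. g x} else {})"
      by (auto simp: graph_strip_def)
    then show "emeasure lborel (Pair x -` graph_strip g A \<delta>) = ennreal \<delta> * indicator A x"
      using assms(3) by (simp add: indicator_def)
  qed
  also have "\<dots> = emeasure lborel A * ennreal \<delta>"
    using assms(2) by (simp add: nn_integral_cmult_indicator mult.commute)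
  finally show ?thesis .
qed

lemma (in finite_measure) measure_diff_le_measure_Diff:
  assumes "A \<in> sets M" "B \<in> sets M"
  shows "measure M A - measure M B \<le> measure M (A - B)"
proof -
  have "measure M (A \<inter> B) \<le> measure M B"
    using assms by (intro finite_measure_mono) auto
  moreover have "measure M (A - B) = measure M A - measure M (A \<inter> B)"
    using assms by (intro finite_measure_Diff') auto
  ultimately show ?thesis
    by linarith
qed

locale bounded_trip_density = finite_measure F for F :: "(real \<times> real) measure" +
  fixes Td X :: "real set" and G :: real
  assumes sets_F: "sets F = sets borel"
    and closed_Td: "closed Td"
    and closed_X: "closed X"
    and G_nonneg: "0 \<le> G"
    and density_bound:
      "\<And>B. B \<in> sets borel \<Longrightarrow> B \<subseteq> Td \<times> X \<Longrightarrow> emeasure F B \<le> ennreal G * emeasure lborel B"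
begin

lemma measure_le_if_emeasure_lborel_le:
  assumes "B \<in> sets borel" "B \<subseteq> Td \<times> X" "emeasure lborel B \<le> ennreal r" "0 \<le> r"
  shows "measure F B \<le> G * r"
proof -
  have "emeasure F B \<le> ennreal G * ennreal r"
    using density_bound[OF assms(1,2)] assms(3) by (meson mult_left_mono order_trans zero_le)
  then show ?thesis
    using G_nonneg assms(4) by (simp add: emeasure_eq_measure ennreal_mult[symmetric])
qed

lemma measure_above_graph_diff_le:
  assumes "continuous_on {0..s} f" "continuous_on {0..s} g"
    and "\<And>\<tau>. \<tau> \<in> {0..s} \<Longrightarrow> \<bar>f \<tau> - g \<tau>\<bar> \<le> \<delta>" "0 \<le> s"
  shows "measure F (above_graph Td X s f) - measure F (above_graph Td X s g) \<le> G * (s * \<delta>)"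
proof -
  let ?A = "above_graph Td X s f" and ?B = "above_graph Td X s g"
  have \<delta>: "0 \<le> \<delta>"
    using assms(3)[of s] assms(4) by auto
  have g: "continuous_on UNIV (ext_cont g 0 s)"
    using assms(2) by (intro continuous_on_ext_cont) simp
  have AB: "?A \<in> sets borel" "?B \<in> sets borel"
    using above_graph_borel[OF closed_Td closed_X] assms(1,2) by auto
  have "?A - ?B \<subseteq> graph_strip (ext_cont g 0 s) {0..s} \<delta>"
    using assms(3) by (fastforce simp: above_graph_def graph_strip_def)
  moreover have "graph_strip (ext_cont g 0 s) {0..s} \<delta> \<in> sets borel"
    using g by (simp add: graph_strip_borel borel_measurable_continuous_onI)
  ultimately have "emeasure lborel (?A - ?B) \<le> emeasure lborel (graph_strip (ext_cont g 0 s) {0..s} \<delta>)"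
    by (intro emeasure_mono) auto
  also have "\<dots> = ennreal (s * \<delta>)"
    using g \<delta> assms(4)
    by (simp add: emeasure_lborel_graph_strip borel_measurable_continuous_onI ennreal_mult)
  finally have "measure F (?A - ?B) \<le> G * (s * \<delta>)"
    using AB \<delta> assms(4)
    by (intro measure_le_if_emeasure_lborel_le) (auto simp: above_graph_def)
  moreover have "measure F ?A - measure F ?B \<le> measure F (?A - ?B)"
    using AB sets_F by (intro measure_diff_le_measure_Diff) auto
  ultimately show ?thesis
    by linarith
qed

lemma measure_above_graph_mono_time:
  assumes "continuous_on {0..s'} f" "0 \<le> s" "s \<le> s'"
  shows "measure F (above_graph Td X s f) \<le> measure F (above_graph Td X s' f)"
proof -
  have "continuous_on {0..s} f"
    using assms(1) by (rule continuous_on_subset) (use assms(3) in auto)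
  then show ?thesis
    using above_graph_borel[OF closed_Td closed_X assms(1)] sets_F assms(3)
    by (intro finite_measure_mono) (auto simp: above_graph_def)
qed

lemma measure_above_graph_time_diff_le:
  assumes "continuous_on {0..s'} f" "0 \<le> s" "s \<le> s'" "X \<subseteq> {a..b}" "a \<le> b"
  shows "measure F (above_graph Td X s' f) - measure F (above_graph Td X s f) \<le> G * ((s' - s) * (b - a))"
proof -
  let ?A = "above_graph Td X s' f" and ?B = "above_graph Td X s f"
  have "continuous_on {0..s} f"
    using assms(1) by (rule continuous_on_subset) (use assms(3) in auto)
  then have AB: "?A \<in> sets borel" "?B \<in> sets borel"
    using above_graph_borel[OF closed_Td closed_X] assms(1) by auto
  have "?A - ?B \<subseteq> {s<..s'} \<times> {a..b}"
    using assms(4) by (auto simp: above_graph_def)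
  then have "emeasure lborel (?A - ?B) \<le> emeasure lborel ({s<..s'} \<times> {a..b})"
    by (intro emeasure_mono) (auto simp: borel_prod[symmetric])
  also have "\<dots> = ennreal ((s' - s) * (b - a))"
    using assms(3,5) by (simp add: lborel_prod[symmetric] lborel.emeasure_pair_measure_Times ennreal_mult)
  finally have "measure F (?A - ?B) \<le> G * ((s' - s) * (b - a))"
    using AB assms(3,5)
    by (intro measure_le_if_emeasure_lborel_le) (auto simp: above_graph_def)
  moreover have "measure F ?A - measure F ?B \<le> measure F (?A - ?B)"
    using AB sets_F by (intro measure_diff_le_measure_Diff) auto
  ultimately show ?thesis
    by linarith
qed

lemma abs_measure_still_travelling_diff_le:
  assumes "continuous_on {0..s} z" "continuous_on {0..s} w"
    and "\<And>\<tau>. \<tau> \<in> {0..s} \<Longrightarrow> \<bar>z \<tau> - w \<tau>\<bar> \<le> D" "0 \<le> s"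
  shows "\<bar>measure F (still_travelling Td X z s) - measure F (still_travelling Td X w s)\<bar>
    \<le> G * (s * (2 * D))"
proof -
  have zw: "\<bar>(z s - z \<tau>) - (w s - w \<tau>)\<bar> \<le> 2 * D" if "\<tau> \<in> {0..s}" for \<tau>
    using assms(3)[OF that] assms(3)[of s] assms(4) by auto
  have "continuous_on {0..s} (\<lambda>\<tau>. z s - z \<tau>)" "continuous_on {0..s} (\<lambda>\<tau>. w s - w \<tau>)"
    using assms(1,2) by (auto intro: continuous_on_diff)
  from measure_above_graph_diff_le[OF this zw assms(4)]
    measure_above_graph_diff_le[OF this(2,1) _ assms(4), of "2 * D"] zw
  show ?thesis
    unfolding still_travelling_eq_above_graph by (auto simp: abs_minus_commute)
qed

lemma abs_measure_still_travelling_time_diff_le: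
  assumes "continuous_on {0..T} z" "0 \<le> s" "s \<le> s'" "s' \<le> T" "X \<subseteq> {a..b}" "a \<le> b"
  shows "\<bar>measure F (still_travelling Td X z s') - measure F (still_travelling Td X z s)\<bar>
    \<le> G * ((s' - s) * (b - a)) + G * (T * \<bar>z s' - z s\<bar>)"
proof -
  let ?M = "\<lambda>s f. measure F (above_graph Td X s f)"
  have "continuous_on {0..s'} z"
    using assms(1) by (rule continuous_on_subset) (use assms(4) in auto)
  then have "continuous_on {0..s} z"
    by (rule continuous_on_subset) (use assms(3) in auto)
  then have later: "continuous_on {0..s} (\<lambda>\<tau>. z s' - z \<tau>)"
    and now: "continuous_on {0..s} (\<lambda>\<tau>. z s - z \<tau>)"
    by (auto intro: continuous_on_diff)
  have "continuous_on {0..s'} (\<lambda>\<tau>. z s' - z \<tau>)"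
    by (intro continuous_intros \<open>continuous_on {0..s'} z\<close>)
  from measure_above_graph_mono_time[OF this assms(2,3)]
    measure_above_graph_time_diff_le[OF this assms(2,3,5,6)]
  have "0 \<le> ?M s' (\<lambda>\<tau>. z s' - z \<tau>) - ?M s (\<lambda>\<tau>. z s' - z \<tau>)"
    "?M s' (\<lambda>\<tau>. z s' - z \<tau>) - ?M s (\<lambda>\<tau>. z s' - z \<tau>) \<le> G * ((s' - s) * (b - a))"
    by auto
  moreover have
    "\<bar>?M s (\<lambda>\<tau>. z s' - z \<tau>) - ?M s (\<lambda>\<tau>. z s - z \<tau>)\<bar> \<le> G * (s * \<bar>z s' - z s\<bar>)"
    using measure_above_graph_diff_le[OF later now _ assms(2), of "\<bar>z s' - z s\<bar>"]
      measure_above_graph_diff_le[OF now later _ assms(2), of "\<bar>z s' - z s\<bar>"]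
    by (auto simp: abs_minus_commute)
  moreover have "G * (s * \<bar>z s' - z s\<bar>) \<le> G * (T * \<bar>z s' - z s\<bar>)"
    using assms(3,4) G_nonneg by (intro mult_left_mono mult_right_mono) auto
  ultimately show ?thesis
    unfolding still_travelling_eq_above_graph by linarith
qed

lemma continuous_on_measure_still_travelling:
  assumes "continuous_on {0..T} z" "X \<subseteq> {a..b}" "a \<le> b"
  shows "continuous_on {0..T} (\<lambda>s. measure F (still_travelling Td X z s))"
  unfolding continuous_on_def
proof
  let ?M = "\<lambda>s. measure F (still_travelling Td X z s)"
  fix s assume s: "s \<in> {0..T}"
  let ?bound = "\<lambda>s'. G * (\<bar>s' - s\<bar> * (b - a)) + G * (T * \<bar>z s' - z s\<bar>)"
  have "\<bar>?M s' - ?M s\<bar> \<le> ?bound s'" if s': "s' \<in> {0..T}" for s'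
  proof (cases "s \<le> s'")
    case True
    then show ?thesis
      using abs_measure_still_travelling_time_diff_le[OF assms(1) _ True _ assms(2,3)] s s' by auto
  next
    case False
    then show ?thesis
      using abs_measure_still_travelling_time_diff_le[OF assms(1) _ _ _ assms(2,3), of s' s] s s'
      by (auto simp: abs_minus_commute)
  qed
  then have "\<forall>\<^sub>F s' in at s within {0..T}. norm (?M s' - ?M s) \<le> ?bound s'"
    by (auto simp: eventually_at_filter intro!: always_eventually)
  moreover have "(?bound \<longlongrightarrow> 0) (at s within {0..T})"
  proof -
    have "(z \<longlongrightarrow> z s) (at s within {0..T})"
      using assms(1) s by (simp add: continuous_on_def)
    then show ?thesis
      by (auto intro!: tendsto_eq_intros)
  qed
  ultimately have "((\<lambda>s'. ?M s' - ?M s) \<longlongrightarrow> 0) (at s within {0..T})"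
    by (rule Lim_null_comparison)
  then show "(?M \<longlongrightarrow> ?M s) (at s within {0..T})"
    by (rule LIM_zero_cancel)
qed

lemma volterra_operator_still_travelling:
  assumes "L-lipschitz_on {0..} V" "0 \<le> T" "X \<subseteq> {a..b}" "a \<le> b"
  shows "volterra_operator T (L * (2 * G * T)) (\<lambda>z s. V (measure F (still_travelling Td X z s)))"
proof
  let ?M = "\<lambda>z s. measure F (still_travelling Td X z s)"
  show "0 \<le> T"
    by (rule assms(2))
  show "continuous_on {0..T} (\<lambda>s. V (?M z s))" if "continuous_on {0..T} z" for z
    using continuous_on_measure_still_travelling[OF that assms(3,4)]
    by (rule continuous_on_compose2[OF lipschitz_on_continuous_on[OF assms(1)]]) auto
  fix z w :: "real \<Rightarrow> real" and s D :: real
  assume z: "continuous_on {0..T} z" and w: "continuous_on {0..T} w" and s: "s \<in> {0..T}"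
    and zw: "\<And>\<tau>. \<tau> \<in> {0..s} \<Longrightarrow> \<bar>z \<tau> - w \<tau>\<bar> \<le> D"
  have D: "0 \<le> D"
    using zw[of s] s by auto
  have "\<bar>V (?M z s) - V (?M w s)\<bar> \<le> L * \<bar>?M z s - ?M w s\<bar>"
    using lipschitz_onD[OF assms(1)] by (simp add: dist_real_def)
  also have "\<dots> \<le> L * (G * (s * (2 * D)))"
  proof (intro mult_left_mono abs_measure_still_travelling_diff_le zw)
    show "continuous_on {0..s} z" "continuous_on {0..s} w"
      using z w s by (auto elim: continuous_on_subset)
  qed (use s lipschitz_on_nonneg[OF assms(1)] in auto)
  also have "\<dots> \<le> L * (2 * G * T) * D"
    using s D G_nonneg lipschitz_on_nonneg[OF assms(1)]
    by (simp add: mult_left_mono mult_right_mono mult.assoc mult.left_commute)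
  finally show "\<bar>V (?M z s) - V (?M w s)\<bar> \<le> L * (2 * G * T) * D" .
qed

end

theorem proposition2:
  fixes Tmax Xmin Xmax G :: real
    and Td Ta :: "real set"
    and m :: "(real \<times> real) measure"
    and V :: "real \<Rightarrow> real"
    and F :: "(real \<times> real) measure"
  assumes Td: "compact Td" "Td \<subseteq> {0..Tmax}"
    and Ta: "compact Ta" "Ta \<subseteq> {0..Tmax}"
    and X: "0 \<le> Xmin" "Xmin < Xmax"
    and m: "sets m = sets borel" "prob_space m" "emeasure m ({Xmin..Xmax} \<times> Ta) = 1"
    and G: "G > 0"
    and V_nonneg: "\<forall>x \<ge> 0. V x \<ge> 0"
    and V_decr: "strict_antimono_on {0..} V"
    and V_lip: "\<exists>C. C-lipschitz_on {0..} V"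
    and F: "F \<in> P_mG Td Ta {Xmin..Xmax} m G"
  shows "\<exists>z. continuous_on {0..Tmax} z \<and>
           (\<forall>t \<in> {0..Tmax}.
              ((\<lambda>s. V (measure F (still_travelling Td {Xmin..Xmax} z s))) has_integral z t) {0..t}) \<and>
           (\<forall>w. continuous_on {0..Tmax} w \<and>
              (\<forall>t \<in> {0..Tmax}.
                 ((\<lambda>s. V (measure F (still_travelling Td {Xmin..Xmax} w s))) has_integral w t) {0..t})
              \<longrightarrow> (\<forall>t \<in> {0..Tmax}. w t = z t))"
proof -
  from F have sets_F: "sets F = sets borel" and prob_F: "prob_space F"
    and F_support: "emeasure F (Td \<times> {Xmin..Xmax}) = 1"
    and density: "\<forall>B\<in>sets borel. B \<subseteq> Td \<times> {Xmin..Xmax} \<longrightarrow>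
      emeasure F B \<le> ennreal G * emeasure lborel B"
    unfolding P_mG_def by auto
  interpret prob_space F
    by (rule prob_F)
  interpret trips: bounded_trip_density F Td "{Xmin..Xmax}" G
    using sets_F density compact_imp_closed[OF Td(1)] G by unfold_locales auto
  have "Td \<noteq> {}"
    using F_support by auto
  then have "0 \<le> Tmax"
    using Td(2) by auto
  moreover obtain L where "L-lipschitz_on {0..} V"
    using V_lip by blast
  ultimately interpret volterra_operator Tmax "L * (2 * G * Tmax)"
    "\<lambda>z s. V (measure F (still_travelling Td {Xmin..Xmax} z s))"
    using X(2) by (intro trips.volterra_operator_still_travelling[where a = Xmin and b = Xmax]) auto
  show ?thesis
    by (rule integral_equation_unique_solution)
qed

end
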